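(* Let $T:\mathcal P(\mathbb R^n)\to\mathcal P(\mathbb R^n)$ be given by $TA=\{y\in\mathbb R^n:\ \langle x,y\rangle\ge 1\ \forall x\in A\}$. Then the class $\mathcal C=\{TK:K\subseteq\mathbb R^n\}$ consists exactly of $\mathbb R^n$ together with all closed convex sets $K\subseteq\mathbb R^n$ such that $0\notin K$ and $\lambda K\subseteq K$ for all $\lambda\ge 1$.
   Context: $\mathcal P(\mathbb R^n)$ is the power set of $\mathbb R^n$ and $\langle\cdot,\cdot\rangle$ the standard inner product. *)

theory Defs
  imports "HOL-Analysis.Analysis"
begin

definition polarT :: "'a::euclidean_space set \<Rightarrow> 'a set" where
  "polarT A = {y. \<forall>x\<in>A. inner x y \<ge> 1}"

end

theory Submission
  imports Defs
begin

text \<open>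
  Every polar set is an intersection of closed half-spaces not containing 0 and is therefore
  closed, convex and stable under dilations by factors at least 1; the only exception is the
  polar of the empty set, which is the whole space. Conversely such a set K equals its bipolar:
  a point y outside K is separated from K by a hyperplane, and because K is dilation-stable and
  avoids 0 this separating functional can be rescaled, if necessary after adding a functional
  separating K from 0, into some x with x \<bullet> k \<ge> 1 on K but x \<bullet> y < 1.
\<close>

definition dilation_stable :: "'a::real_vector set \<Rightarrow> bool" where
  "dilation_stable K \<longleftrightarrow> (\<forall>l::real. l \<ge> 1 \<longrightarrow> (\<lambda>x. l *\<^sub>R x) ` K \<subseteq> K)"

lemma dilation_stableI:
  "(\<And>l x. l \<ge> 1 \<Longrightarrow> x \<in> K \<Longrightarrow> l *\<^sub>R x \<in> K) \<Longrightarrow> dilation_stable K"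
  unfolding dilation_stable_def by blast

lemma dilation_stableD: "dilation_stable K \<Longrightarrow> l \<ge> 1 \<Longrightarrow> x \<in> K \<Longrightarrow> l *\<^sub>R x \<in> K"
  unfolding dilation_stable_def by blast

lemma dilation_stable_inner_nonneg:
  fixes K :: "'a::real_inner set"
  assumes "dilation_stable K" and bounded_below: "\<forall>k\<in>K. b < inner a k" and "k \<in> K"
  shows "0 \<le> inner a k"
proof (rule ccontr)
  assume neg: "\<not> 0 \<le> inner a k"
  define l where "l = 1 + \<bar>b\<bar> / (- inner a k)"
  have "l \<ge> 1"
    using neg by (simp add: l_def divide_nonneg_neg)
  then have "l *\<^sub>R k \<in> K"
    using assms dilation_stableD by blast
  then have "b < inner a (l *\<^sub>R k)"
    using bounded_below by blast
  moreover have "inner a (l *\<^sub>R k) = inner a k - \<bar>b\<bar>"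
    using neg by (simp add: l_def field_simps)
  ultimately show False
    using neg by linarith
qed

lemma polarT_empty [simp]: "polarT {} = UNIV"
  unfolding polarT_def by simp

lemma polarT_eq_INT: "polarT A = (\<Inter>x\<in>A. {y. inner x y \<ge> 1})"
  unfolding polarT_def by auto

lemma closed_polarT: "closed (polarT A)"
  unfolding polarT_eq_INT by (intro closed_INT ballI closed_halfspace_ge)

lemma convex_polarT: "convex (polarT A)"
  unfolding polarT_eq_INT by (intro convex_INT ballI convex_halfspace_ge)

lemma zero_notin_polarT: "A \<noteq> {} \<Longrightarrow> 0 \<notin> polarT A"
  unfolding polarT_def by auto

lemma dilation_stable_polarT: "dilation_stable (polarT A)"
proof (rule dilation_stableI)
  fix l :: real and y
  assume l: "l \<ge> 1" and y: "y \<in> polarT A"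
  have "1 \<le> inner x (l *\<^sub>R y)" if "x \<in> A" for x
  proof -
    have "1 \<le> inner x y"
      using y that unfolding polarT_def by blast
    then have "1 * 1 \<le> l * inner x y"
      using l by (intro mult_mono) auto
    then show ?thesis
      by simp
  qed
  then show "l *\<^sub>R y \<in> polarT A"
    unfolding polarT_def by blast
qed

lemma subset_polarT_polarT: "K \<subseteq> polarT (polarT K)"
  unfolding polarT_def by (auto simp: inner_commute)

lemma separating_functional_ge_1:
  fixes K :: "'a::euclidean_space set"
  assumes "closed K" "convex K" "0 \<notin> K" "dilation_stable K" "y \<notin> K"
  obtains x where "\<forall>k\<in>K. 1 \<le> inner x k" "inner x y < 1"
proof -
  obtain a b where ay: "inner a y < b" and aK: "\<forall>k\<in>K. b < inner a k"
    using separating_hyperplane_closed_point[OF \<open>convex K\<close> \<open>closed K\<close> \<open>y \<notin> K\<close>] by blast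
  obtain a0 b0 where b0: "0 < b0" and a0K: "\<forall>k\<in>K. b0 < inner a0 k"
    using separating_hyperplane_closed_0[OF \<open>convex K\<close> \<open>closed K\<close> \<open>0 \<notin> K\<close>] by blast
  show ?thesis
  proof (cases "b > 0")
    case True
    show ?thesis
    proof (rule that[of "(1 / b) *\<^sub>R a"])
      show "\<forall>k\<in>K. 1 \<le> inner ((1 / b) *\<^sub>R a) k"
        using True aK by (simp add: field_simps less_imp_le)
      show "inner ((1 / b) *\<^sub>R a) y < 1"
        using True ay by (simp add: field_simps)
    qed
  next
    case False
    \<comment> \<open>Now a \<bullet> y < 0 \<le> a \<bullet> k, so a large multiple of a absorbs the a0-term at y.\<close>
    have a_nonneg: "0 \<le> inner a k" if "k \<in> K" for k
      using dilation_stable_inner_nonneg[OF \<open>dilation_stable K\<close> aK that] .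
    have ay_neg: "inner a y < 0"
      using ay False by linarith
    define s where "s = (\<bar>inner a0 y / b0\<bar> + 1) / (- inner a y)"
    have s_nonneg: "0 \<le> s"
      using ay_neg unfolding s_def by (intro divide_nonneg_pos) auto
    have s_ay: "s * inner a y = - (\<bar>inner a0 y / b0\<bar> + 1)"
      using ay_neg unfolding s_def by (simp add: field_simps)
    show ?thesis
    proof (rule that[of "s *\<^sub>R a + (1 / b0) *\<^sub>R a0"])
      show "\<forall>k\<in>K. 1 \<le> inner (s *\<^sub>R a + (1 / b0) *\<^sub>R a0) k"
      proof
        fix k assume "k \<in> K"
        then have "0 \<le> s * inner a k" and "1 < inner a0 k / b0"
          using s_nonneg a_nonneg a0K b0 by (simp_all add: field_simps)
        then show "1 \<le> inner (s *\<^sub>R a + (1 / b0) *\<^sub>R a0) k"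
          by (simp add: inner_add_left)
      qed
      have "inner (s *\<^sub>R a + (1 / b0) *\<^sub>R a0) y = s * inner a y + inner a0 y / b0"
        by (simp add: inner_add_left)
      then show "inner (s *\<^sub>R a + (1 / b0) *\<^sub>R a0) y < 1"
        using s_ay by linarith
    qed
  qed
qed

lemma polarT_polarT:
  fixes K :: "'a::euclidean_space set"
  assumes "closed K" "convex K" "0 \<notin> K" "dilation_stable K"
  shows "polarT (polarT K) = K"
proof
  show "polarT (polarT K) \<subseteq> K"
  proof
    fix y assume y: "y \<in> polarT (polarT K)"
    show "y \<in> K"
    proof (rule ccontr)
      assume "y \<notin> K"
      then obtain x where "\<forall>k\<in>K. 1 \<le> inner x k" and xy: "inner x y < 1"
        using separating_functional_ge_1 assms by blast
      then have "x \<in> polarT K"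
        unfolding polarT_def by (simp add: inner_commute)
      then show False
        using y xy unfolding polarT_def by fastforce
    qed
  qed
qed (rule subset_polarT_polarT)

theorem lemma5p1:
  shows "{polarT K | K :: 'a::euclidean_space set. True} =
         insert UNIV {K :: 'a set. closed K \<and> convex K \<and> 0 \<notin> K \<and>
                        (\<forall>l::real. l \<ge> 1 \<longrightarrow> (\<lambda>x. l *\<^sub>R x) ` K \<subseteq> K)}"
  unfolding dilation_stable_def[symmetric]
proof (intro set_eqI iffI)
  fix S :: "'a set"
  assume "S \<in> {polarT K | K. True}"
  then obtain A where "S = polarT A"
    by blast
  then show "S \<in> insert UNIV {K. closed K \<and> convex K \<and> 0 \<notin> K \<and> dilation_stable K}"
    by (cases "A = {}")
      (simp_all add: closed_polarT convex_polarT zero_notin_polarT dilation_stable_polarT)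
next
  fix S :: "'a set"
  assume "S \<in> insert UNIV {K. closed K \<and> convex K \<and> 0 \<notin> K \<and> dilation_stable K}"
  then have "S = polarT {} \<or> S = polarT (polarT S)"
    using polarT_polarT by auto
  then show "S \<in> {polarT K | K. True}"
    by blast
qed

end
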